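(* Let $\mathbb{F}\in\{\mathbb{R},\mathbb{C}\}$, $A\in\mathbb{F}^{m\times n}$ with $\|A\|_{\infty,col}\le1$, $b\in\mathbb{F}^m$, $\mu>0$, and let $N\ge1$ be an integer with $\beta_N>0$. Let $x'$ be a stationary point of $\mathcal{K}_{reg}$, set $z'=(I-A^*A)x'+A^*b$, and assume $$|z'_i|\notin\Big[\beta_N^2\sqrt{\mu},\ \frac{\sqrt{\mu}}{\beta_N^2}\Big]\quad\text{for all }1\le i\le n.$$ If $2\mu\,\mathrm{card}(x')+\|Ax'-b\|_2^2<\mu N+\mu$, then $x'$ is the unique global minimizer of $\mathcal{K}$ and of $\mathcal{K}_{reg}$.
   Context: $\|A\|_{\infty,col}=\max_i\|a_i\|_2$ over the columns $a_i$ of $A$. $\mathrm{card}(x)$ is the number of nonzero entries; $\beta_k=\inf\{\|Ax\|_2/\|x\|_2:x\ne0,\ \mathrm{card}(x)\le k\}$. $\mathcal{K}(x)=\mu\,\mathrm{card}(x)+\|Ax-b\|_2^2$ and $\mathcal{K}_{reg}(x)=\mathcal{Q}_2(\mu\,\mathrm{card})(x)+\|Ax-b\|_2^2$ with $\mathcal{Q}_2(\mu\,\mathrm{card})(x)=\sum_{j=1}^n\big(\mu-(\max\{\sqrt{\mu}-|x_j|,0\})^2\big)$. $A^*$ is the conjugate transpose. A stationary point of a function $g$ is a point $x$ with $0$ in the Fréchet subdifferential $\hat\partial g(x)$, i.e. the set of $v$ with $\liminf_{y\to x,y\ne x}(g(y)-g(x)-\mathrm{Re}\langle v,y-x\rangle)/\|y-x\|\ge0$.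 *)

theory Defs
  imports "HOL-Analysis.Analysis"
begin

text \<open>Vectors in F^n are 'a ^ 'n, matrices in F^(m x n) are 'a ^ 'n ^ 'm,
  with 'a = real or 'a = complex.
  The real inner product Re<v,w> on F^n is the library inner on vec.\<close>

definition col_inf_norm :: "('a::real_normed_vector) ^ 'n ^ 'm \<Rightarrow> real" where
  "col_inf_norm A = Max (range (\<lambda>i. sqrt (\<Sum>r\<in>UNIV. (norm (A $ r $ i))\<^sup>2)))"

definition card_nz :: "('a::zero) ^ 'n \<Rightarrow> nat" where
  "card_nz x = card {i. x $ i \<noteq> 0}"

definition beta :: "('a::{real_normed_vector,semiring_1}) ^ 'n ^ 'm \<Rightarrow> nat \<Rightarrow> real" where
  "beta A k = Inf {norm (A *v x) / norm x | x. x \<noteq> 0 \<and> card_nz x \<le> k}"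

text \<open>Conjugate transpose, parametrised by the conjugation of the scalar field
  (identity for real, cnj for complex).\<close>
definition adjoint :: "('a \<Rightarrow> 'a) \<Rightarrow> ('a::semiring_1) ^ 'n ^ 'm \<Rightarrow> 'a ^ 'm ^ 'n" where
  "adjoint cj A = (\<chi> j i. cj (A $ i $ j))"

definition K_fun :: "real \<Rightarrow> ('a::{real_normed_vector,semiring_1}) ^ 'n ^ 'm \<Rightarrow> 'a ^ 'm \<Rightarrow> 'a ^ 'n \<Rightarrow> real" where
  "K_fun mu A b x = mu * real (card_nz x) + (norm (A *v x - b))\<^sup>2"

definition Q2_card :: "real \<Rightarrow> ('a::real_normed_vector) ^ 'n \<Rightarrow> real" where
  "Q2_card mu x = (\<Sum>j\<in>UNIV. mu - (max (sqrt mu - norm (x $ j)) 0)\<^sup>2)"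

definition K_reg :: "real \<Rightarrow> ('a::{real_normed_vector,semiring_1}) ^ 'n ^ 'm \<Rightarrow> 'a ^ 'm \<Rightarrow> 'a ^ 'n \<Rightarrow> real" where
  "K_reg mu A b x = Q2_card mu x + (norm (A *v x - b))\<^sup>2"

definition frechet_subdiff :: "('v::real_inner \<Rightarrow> real) \<Rightarrow> 'v \<Rightarrow> 'v set" where
  "frechet_subdiff g x = {v. Liminf (at x) (\<lambda>y. ereal ((g y - g x - inner v (y - x)) / norm (y - x))) \<ge> 0}"

definition stationary :: "('v::real_inner \<Rightarrow> real) \<Rightarrow> 'v \<Rightarrow> bool" where
  "stationary g x \<longleftrightarrow> 0 \<in> frechet_subdiff g x"

definition unique_global_min :: "('v \<Rightarrow> real) \<Rightarrow> 'v \<Rightarrow> bool" where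
  "unique_global_min g x \<longleftrightarrow> (\<forall>y. y \<noteq> x \<longrightarrow> g x < g y)"

end

theory Submission
  imports Defs
begin

(* Write z = x' - A^*(A x' - b) and g(t) = Q_2(mu card)(t) + |t|^2 for the coordinate penalty plus its
   square; g is convex. Expanding the residual gives
     K_reg(x' + d) - K_reg(x') = sum_j [g(x'_j + d_j) - g(x'_j) - 2 Re<z_j, d_j>] - |d|^2 + |A d|^2.
   Stationarity, together with columns of norm at most 1, makes 2 z_j a subgradient of g at x'_j, and the
   gap condition on |z_j| then leaves two regimes: x'_j = 0 with |z_j| < beta_N^2 sqrt mu, or z_j = x'_j
   with |x'_j| > sqrt mu / beta_N^2. In both, the j-th bracket exceeds (1 - beta_N^2) |d_j|^2, so for
   card d <= N the increment is bounded below by |A d|^2 - beta_N^2 |d|^2 >= 0, strictly for d ~= 0.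
   Since K_reg <= K with equality at x', no y ~= x' with card (y - x') <= N beats x' for K, and every
   other y costs at least mu (N + 1 - card x'), which the budget 2 mu card x' + |A x' - b|^2 < mu (N + 1)
   excludes. For K_reg itself: along a coordinate with 0 < |y_j| < sqrt mu, K_reg is a concave
   quadratic, so K_reg(y) dominates a convex combination of its values where that coordinate is pushed
   to 0 or to modulus sqrt mu; induction on the number of such coordinates reduces to vectors without
   them, on which K_reg = K. *)

section \<open>The coordinate penalty plus its square\<close>

definition q2_coord :: "real \<Rightarrow> 'a::real_normed_vector \<Rightarrow> real" where
  "q2_coord mu t = mu - (max (sqrt mu - norm t) 0)\<^sup>2"

definition q2_sq :: "real \<Rightarrow> 'a::real_normed_vector \<Rightarrow> real" where
  "q2_sq mu t = q2_coord mu t + (norm t)\<^sup>2"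

lemma Q2_card_eq_sum_q2_coord: "Q2_card mu v = (\<Sum>j\<in>UNIV. q2_coord mu (v $ j))"
  by (simp add: Q2_card_def q2_coord_def)

lemma q2_coord_le:
  assumes "0 \<le> mu"
  shows "q2_coord mu t \<le> (if t = 0 then 0 else mu)"
  using assms by (auto simp: q2_coord_def)

lemma q2_coord_eq:
  assumes "0 \<le> mu" "t = 0 \<or> sqrt mu \<le> norm t"
  shows "q2_coord mu t = (if t = 0 then 0 else mu)"
  using assms by (auto simp: q2_coord_def)

lemma q2_sq_small:
  assumes "0 \<le> mu" "norm t \<le> sqrt mu"
  shows "q2_sq mu t = 2 * sqrt mu * norm t"
  using assms by (simp add: q2_sq_def q2_coord_def power2_eq_square algebra_simps)

lemma q2_sq_large:
  assumes "0 \<le> mu" "sqrt mu \<le> norm t"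
  shows "q2_sq mu t = mu + (norm t)\<^sup>2"
  using assms by (simp add: q2_sq_def q2_coord_def)

lemma q2_sq_zero [simp]: "0 \<le> mu \<Longrightarrow> q2_sq mu 0 = 0"
  by (simp add: q2_sq_small)

lemma q2_sq_le:
  assumes "0 \<le> mu"
  shows "q2_sq mu t \<le> mu + (norm t)\<^sup>2"
  using assms by (simp add: q2_sq_def q2_coord_def)

text \<open>\<open>q2_sq mu\<close> is the supremum of the convex functions \<open>t \<mapsto> 2 c \<parallel>t\<parallel> - c\<^sup>2 + mu\<close> over
  \<open>c \<ge> sqrt mu\<close>, attained at \<open>c = max \<parallel>t\<parallel> (sqrt mu)\<close>.\<close>

lemma q2_sq_ge_tangent:
  assumes "0 \<le> mu" "sqrt mu \<le> c"
  shows "2 * c * norm t - c\<^sup>2 + mu \<le> q2_sq mu t"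
proof (cases "norm t \<le> sqrt mu")
  case True
  have "0 \<le> (c - sqrt mu) * (c + sqrt mu - 2 * norm t)"
    using assms True by (intro mult_nonneg_nonneg) auto
  then show ?thesis
    using assms True by (simp add: q2_sq_small power2_eq_square algebra_simps)
next
  case False
  have "0 \<le> (norm t - c)\<^sup>2" by simp
  then show ?thesis
    using assms False by (simp add: q2_sq_large power2_eq_square algebra_simps)
qed

lemma q2_sq_eq_tangent:
  assumes "0 \<le> mu"
  shows "q2_sq mu t = 2 * max (norm t) (sqrt mu) * norm t - (max (norm t) (sqrt mu))\<^sup>2 + mu"
  using assms
  by (cases "norm t \<le> sqrt mu") (simp_all add: q2_sq_small q2_sq_large max_def power2_eq_square)

lemma convex_on_q2_sq:
  assumes mu: "0 \<le> mu"
  shows "convex_on UNIV (q2_sq mu :: 'a::real_normed_vector \<Rightarrow> real)"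
proof (rule convex_onI)
  fix s :: real and x y :: 'a
  assume s: "0 < s" "s < 1"
  define c where "c = max (norm ((1 - s) *\<^sub>R x + s *\<^sub>R y)) (sqrt mu)"
  have c: "sqrt mu \<le> c" "0 \<le> c" by (auto simp: c_def le_max_iff_disj)
  have "norm ((1 - s) *\<^sub>R x + s *\<^sub>R y) \<le> (1 - s) * norm x + s * norm y"
    using s norm_triangle_ineq[of "(1 - s) *\<^sub>R x" "s *\<^sub>R y"] by simp
  then have "q2_sq mu ((1 - s) *\<^sub>R x + s *\<^sub>R y) \<le> 2 * c * ((1 - s) * norm x + s * norm y) - c\<^sup>2 + mu"
    using c unfolding q2_sq_eq_tangent[OF mu] c_def[symmetric] by (simp add: mult_left_mono)
  also have "\<dots> = (1 - s) * (2 * c * norm x - c\<^sup>2 + mu) + s * (2 * c * norm y - c\<^sup>2 + mu)"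
    by (simp add: algebra_simps)
  also have "\<dots> \<le> (1 - s) * q2_sq mu x + s * q2_sq mu y"
    using s q2_sq_ge_tangent[OF mu c(1)] by (intro add_mono mult_left_mono) auto
  finally show "q2_sq mu ((1 - s) *\<^sub>R x + s *\<^sub>R y) \<le> (1 - s) * q2_sq mu x + s * q2_sq mu y" .
qed simp

lemma q2_sq_subgradient_at_zero:
  fixes z :: "'a::real_inner"
  assumes mu: "0 < mu" and sg: "\<And>e. 2 * inner z e \<le> q2_sq mu e"
  shows "norm z \<le> sqrt mu"
proof (rule ccontr)
  assume "\<not> norm z \<le> sqrt mu"
  then have z: "sqrt mu < norm z" by simp
  define e where "e = (sqrt mu / norm z) *\<^sub>R z"
  have z0: "0 < norm z" using z real_sqrt_ge_zero[of mu] mu by linarith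
  have "norm e = sqrt mu" using z0 mu by (simp add: e_def)
  moreover have "inner z e = sqrt mu * norm z"
    using z0 by (simp add: e_def power2_norm_eq_inner[symmetric] power2_eq_square)
  ultimately have "sqrt mu * norm z \<le> sqrt mu * sqrt mu"
    using sg[of e] mu by (simp add: q2_sq_small)
  moreover have "sqrt mu * sqrt mu < sqrt mu * norm z"
    using z mu by (intro mult_strict_left_mono) auto
  ultimately show False by linarith
qed

lemma q2_sq_subgradient_small:
  fixes x z :: "'a::real_inner"
  assumes mu: "0 < mu" and sg: "\<And>e. q2_sq mu x + 2 * inner z e \<le> q2_sq mu (x + e)"
    and x: "0 < norm x" "norm x < sqrt mu"
  shows "norm z = sqrt mu"
proof -
  have "2 * sqrt mu * norm x \<le> 2 * inner z x"
    using sg[of "- x"] mu x by (simp add: q2_sq_small)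
  also have "\<dots> \<le> 2 * (norm z * norm x)"
    using norm_cauchy_schwarz[of z x] by simp
  finally have ge: "sqrt mu \<le> norm z" using x by simp
  then have z: "0 < norm z" using mu by (meson less_le_trans real_sqrt_gt_zero)
  define t where "t = sqrt mu - norm x"
  define e where "e = (t / norm z) *\<^sub>R z"
  have t: "0 < t" using x by (simp add: t_def)
  have ne: "norm e = t" using t z by (simp add: e_def)
  have xe: "norm (x + e) \<le> norm x + t" using norm_triangle_ineq[of x e] ne by simp
  then have "2 * sqrt mu * norm x + 2 * inner z e \<le> 2 * sqrt mu * norm (x + e)"
    using sg[of e] mu x by (simp add: q2_sq_small t_def)
  also have "\<dots> \<le> 2 * sqrt mu * (norm x + t)" using xe mu by simp
  finally have "inner z e \<le> sqrt mu * t" by (simp add: algebra_simps)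
  moreover have "inner z e = t * norm z"
    using z by (simp add: e_def power2_norm_eq_inner[symmetric] power2_eq_square)
  ultimately have "norm z \<le> sqrt mu" using t by (simp add: mult.commute)
  with ge show ?thesis by simp
qed

lemma q2_sq_subgradient_large:
  fixes x z :: "'a::real_inner"
  assumes mu: "0 < mu" and sg: "\<And>e. q2_sq mu x + 2 * inner z e \<le> q2_sq mu (x + e)"
    and x: "sqrt mu \<le> norm x"
  shows "z = x"
proof -
  have "mu + (norm x)\<^sup>2 + 2 * inner z (z - x) \<le> mu + (norm z)\<^sup>2"
    using sg[of "z - x"] q2_sq_le[of mu z] q2_sq_large[OF _ x] mu by simp
  then have "(norm (z - x))\<^sup>2 \<le> 0"
    by (simp add: power2_norm_eq_inner inner_diff_left inner_diff_right inner_commute algebra_simps)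
  then show ?thesis by simp
qed

definition gap_regime :: "real \<Rightarrow> real \<Rightarrow> 'a::real_normed_vector \<Rightarrow> 'a \<Rightarrow> bool" where
  "gap_regime mu bt x z \<longleftrightarrow>
     (x = 0 \<and> norm z < bt\<^sup>2 * sqrt mu) \<or> (z = x \<and> sqrt mu / bt\<^sup>2 < norm x)"

lemma q2_sq_subgradient_gap_regime:
  fixes x z :: "'a::real_inner"
  assumes mu: "0 < mu" and bt: "0 < bt" "bt \<le> 1"
    and sg: "\<And>e. q2_sq mu x + 2 * inner z e \<le> q2_sq mu (x + e)"
    and gap: "norm z \<notin> {bt\<^sup>2 * sqrt mu .. sqrt mu / bt\<^sup>2}"
  shows "gap_regime mu bt x z"
proof -
  have low: "bt\<^sup>2 * sqrt mu \<le> sqrt mu" and high: "sqrt mu \<le> sqrt mu / bt\<^sup>2"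
    using bt mu by (simp_all add: power_le_one mult_left_le_one_le le_divide_eq)
  consider "x = 0" | "0 < norm x" "norm x < sqrt mu" | "sqrt mu \<le> norm x"
    by force
  then show ?thesis
  proof cases
    case 1
    have "norm z \<le> sqrt mu"
    proof (rule q2_sq_subgradient_at_zero[OF mu])
      show "2 * inner z e \<le> q2_sq mu e" for e using sg[of e] 1 mu by simp
    qed
    then show ?thesis using 1 gap high by (auto simp: gap_regime_def)
  next
    case 2
    then have "norm z = sqrt mu" using q2_sq_subgradient_small[OF mu sg] by simp
    then show ?thesis using gap low high by simp
  next
    case 3
    then have "z = x" using q2_sq_subgradient_large[OF mu sg] by simp
    then show ?thesis using 3 gap low by (auto simp: gap_regime_def)
  qed
qed

lemma q2_sq_excess_at_zero:
  fixes z e :: "'a::real_inner"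
  assumes mu: "0 < mu" and bt: "bt\<^sup>2 \<le> 1" and z: "norm z < bt\<^sup>2 * sqrt mu" and e: "e \<noteq> 0"
  shows "(1 - bt\<^sup>2) * (norm e)\<^sup>2 < q2_sq mu e - 2 * inner z e"
proof -
  have "inner z e \<le> norm z * norm e" by (rule norm_cauchy_schwarz)
  also have "\<dots> < bt\<^sup>2 * sqrt mu * norm e" using z e by simp
  finally have ze: "inner z e < bt\<^sup>2 * (sqrt mu * norm e)" by (simp add: mult.assoc)
  show ?thesis
  proof (cases "norm e \<le> sqrt mu")
    case True
    have "(1 - bt\<^sup>2) * (norm e)\<^sup>2 \<le> (1 - bt\<^sup>2) * (sqrt mu * norm e)"
      using bt mult_right_mono[OF True norm_ge_zero[of e]]
      by (intro mult_left_mono) (auto simp: power2_eq_square)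
    also have "\<dots> < 2 * sqrt mu * norm e - 2 * inner z e"
    proof -
      have "0 \<le> (1 - bt\<^sup>2) * (sqrt mu * norm e)" using bt mu by simp
      then show ?thesis using ze by (simp add: algebra_simps)
    qed
    finally show ?thesis using True mu by (simp add: q2_sq_small)
  next
    case False
    have "0 \<le> (1 - bt\<^sup>2) * mu + bt\<^sup>2 * (norm e - sqrt mu)\<^sup>2" using bt mu by simp
    then show ?thesis
      using ze False mu by (simp add: q2_sq_large power2_eq_square algebra_simps)
  qed
qed

lemma q2_sq_excess_large:
  fixes x e :: "'a::real_inner"
  assumes mu: "0 < mu" and bt: "0 < bt" "bt \<le> 1" and x: "sqrt mu / bt\<^sup>2 < norm x"
    and e: "e \<noteq> 0"
  shows "(1 - bt\<^sup>2) * (norm e)\<^sup>2 < q2_sq mu (x + e) - q2_sq mu x - 2 * inner x e"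
proof -
  have "sqrt mu \<le> sqrt mu / bt\<^sup>2"
    using bt mu by (simp add: power_le_one le_divide_eq)
  then have "sqrt mu \<le> norm x" using x by simp
  then have excess: "q2_sq mu (x + e) - q2_sq mu x - 2 * inner x e
      = (norm e)\<^sup>2 - (max (sqrt mu - norm (x + e)) 0)\<^sup>2"
    using mu by (simp add: q2_sq_def q2_coord_def power2_norm_eq_inner inner_add_left
        inner_add_right inner_commute)
  have "max (sqrt mu - norm (x + e)) 0 < bt * norm e"
  proof (cases "norm (x + e) \<le> sqrt mu")
    case True
    have "sqrt mu < bt * norm x"
    proof -
      have "sqrt mu \<le> sqrt mu / bt" using bt mu by (simp add: le_divide_eq)
      also have "\<dots> < bt * norm x" using x bt by (simp add: divide_less_eq power2_eq_square ac_simps)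
      finally show ?thesis .
    qed
    moreover have "bt * norm (x + e) \<le> norm (x + e)" using bt by (simp add: mult_left_le_one_le)
    moreover have "bt * norm x \<le> bt * (norm (x + e) + norm e)"
      using bt norm_triangle_ineq4[of "x + e" e] by (intro mult_left_mono) auto
    ultimately show ?thesis using True by (simp add: algebra_simps)
  next
    case False
    then show ?thesis using bt e by simp
  qed
  then have "(max (sqrt mu - norm (x + e)) 0)\<^sup>2 < (bt * norm e)\<^sup>2"
    by (intro power_strict_mono) auto
  then show ?thesis using excess by (simp add: power_mult_distrib algebra_simps)
qed

lemma q2_sq_excess_gap_regime:
  fixes x z e :: "'a::real_inner"
  assumes "0 < mu" "0 < bt" "bt \<le> 1" "gap_regime mu bt x z" "e \<noteq> 0"
  shows "(1 - bt\<^sup>2) * (norm e)\<^sup>2 < q2_sq mu (x + e) - q2_sq mu x - 2 * inner z e"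
  using assms q2_sq_excess_at_zero[of mu bt z e] q2_sq_excess_large[of mu bt x e]
  by (auto simp: gap_regime_def power_le_one q2_sq_small)

section \<open>Stationarity, sparse vectors and the lower bound beta\<close>

lemma stationary_directional_nonneg:
  fixes g :: "'v::real_inner \<Rightarrow> real"
  assumes st: "stationary g x"
    and dir: "\<And>s. 0 < s \<Longrightarrow> s \<le> 1 \<Longrightarrow> g (x + s *\<^sub>R d) - g x \<le> s * D"
  shows "0 \<le> D"
proof (rule ccontr)
  assume "\<not> 0 \<le> D"
  then have D: "D < 0" by simp
  then have d: "d \<noteq> 0" using dir[of 1] by auto
  define eps where "eps = - D / (2 * norm d)"
  have eps: "0 < eps" unfolding eps_def using D d by (intro divide_pos_pos) auto
  have "\<forall>y<ereal 0. \<forall>\<^sub>F z in at x. y < ereal ((g z - g x) / norm (z - x))"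
    using st by (simp add: stationary_def frechet_subdiff_def zero_ereal_def le_Liminf_iff)
  then have "\<forall>\<^sub>F z in at x. - eps < (g z - g x) / norm (z - x)"
    using eps by (auto dest: spec[of _ "ereal (- eps)"])
  then obtain dl where dl: "0 < dl"
    and near: "\<And>y. y \<noteq> x \<Longrightarrow> dist y x < dl \<Longrightarrow> - eps < (g y - g x) / norm (y - x)"
    unfolding eventually_at by auto
  define s where "s = min 1 (dl / (2 * norm d))"
  have s: "0 < s" "s \<le> 1" "s * norm d < dl"
    using dl d by (auto simp: s_def min_def field_simps)
  have "- eps < (g (x + s *\<^sub>R d) - g x) / (s * norm d)"
    using near[of "x + s *\<^sub>R d"] s d by (simp add: dist_norm)
  then have "- eps * (s * norm d) < s * D"
    using dir[OF s(1,2)] s d by (simp add: pos_less_divide_eq)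
  moreover have "- eps * (s * norm d) = s * D / 2"
    using d by (simp add: eps_def)
  moreover have "s * D < 0" using s D by (simp add: mult_pos_neg)
  ultimately show False by linarith
qed

lemma power2_norm_vec: "(norm (v :: 'a::real_normed_vector ^ 'n))\<^sup>2 = (\<Sum>j\<in>UNIV. (norm (v $ j))\<^sup>2)"
  by (simp add: norm_vec_def L2_set_def sum_nonneg)

lemma norm_axis: "norm (axis j e :: 'a::real_normed_vector ^ 'n) = norm e"
proof -
  have "(\<Sum>i\<in>UNIV. (norm (axis j e $ i))\<^sup>2) = (\<Sum>i\<in>UNIV. if i = j then (norm e)\<^sup>2 else 0)"
    by (intro sum.cong) (auto simp: axis_def)
  then have "(norm (axis j e :: 'a ^ 'n))\<^sup>2 = (norm e)\<^sup>2"
    unfolding power2_norm_vec by simp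
  then show ?thesis by simp
qed

lemma power2_norm_add:
  "(norm (x + y :: 'a::real_inner))\<^sup>2 = (norm x)\<^sup>2 + 2 * inner x y + (norm y)\<^sup>2"
  by (simp add: power2_norm_eq_inner inner_add_left inner_add_right inner_commute)

lemma matrix_vector_scaleR_commute:
  "(A :: 'a::real_algebra_1 ^ 'n ^ 'm) *v (c *\<^sub>R v) = c *\<^sub>R (A *v v)"
  by (simp add: matrix_vector_mult_def vec_eq_iff scaleR_sum_right)

lemma card_nz_diff_le: "card_nz (y - x) \<le> card_nz y + card_nz (x :: 'a::ab_group_add ^ 'n)"
proof -
  have "card {i. (y - x) $ i \<noteq> 0} \<le> card ({i. y $ i \<noteq> 0} \<union> {i. x $ i \<noteq> 0})"
    by (intro card_mono) auto
  also have "\<dots> \<le> card {i. y $ i \<noteq> 0} + card {i. x $ i \<noteq> 0}"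
    by (rule card_Un_le)
  finally show ?thesis by (simp add: card_nz_def)
qed

lemma sum_if_nonzero_eq_card_nz:
  "(\<Sum>j\<in>UNIV. if (v::'a::zero ^ 'n) $ j = 0 then 0 else mu) = mu * real (card_nz v)"
proof -
  have "(\<Sum>j\<in>UNIV. if v $ j = 0 then 0 else mu) = (\<Sum>j\<in>{j\<in>UNIV. v $ j \<noteq> 0}. mu)"
    by (subst sum.inter_filter) (auto intro: sum.cong)
  then show ?thesis by (simp add: card_nz_def)
qed

lemma K_reg_le_K_fun:
  assumes "0 \<le> mu"
  shows "K_reg mu A b x \<le> K_fun mu A b x"
proof -
  have "Q2_card mu x \<le> mu * real (card_nz x)"
    unfolding Q2_card_eq_sum_q2_coord sum_if_nonzero_eq_card_nz[symmetric]
    using assms by (intro sum_mono q2_coord_le)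
  then show ?thesis by (simp add: K_reg_def K_fun_def)
qed

lemma K_reg_eq_K_fun:
  assumes "0 \<le> mu" and "\<And>j. x $ j = 0 \<or> sqrt mu \<le> norm (x $ j)"
  shows "K_reg mu A b x = K_fun mu A b x"
proof -
  have "Q2_card mu x = mu * real (card_nz x)"
    unfolding Q2_card_eq_sum_q2_coord sum_if_nonzero_eq_card_nz[symmetric]
    using assms by (intro sum.cong refl q2_coord_eq)
  then show ?thesis by (simp add: K_reg_def K_fun_def)
qed

lemma norm_matrix_vector_axis_le:
  fixes A :: "'a::real_normed_field ^ 'n ^ 'm"
  assumes "col_inf_norm A \<le> 1"
  shows "norm (A *v axis j e) \<le> norm e"
proof -
  have col: "(A *v axis j e) $ r = A $ r $ j * e" for r
    by (simp add: matrix_vector_mult_def axis_def if_distrib cong: if_cong)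
  have "sqrt (\<Sum>r\<in>UNIV. (norm (A $ r $ j))\<^sup>2) \<le> col_inf_norm A"
    unfolding col_inf_norm_def by (intro Max_ge) auto
  then have "sqrt (\<Sum>r\<in>UNIV. (norm (A $ r $ j))\<^sup>2) \<le> 1"
    using assms by linarith
  then have col_sum: "(\<Sum>r\<in>UNIV. (norm (A $ r $ j))\<^sup>2) \<le> 1"
    by simp
  have "(norm (A *v axis j e))\<^sup>2 = (\<Sum>r\<in>UNIV. (norm (A $ r $ j))\<^sup>2) * (norm e)\<^sup>2"
    unfolding power2_norm_vec col by (simp add: norm_mult power_mult_distrib sum_distrib_right)
  also have "\<dots> \<le> (norm e)\<^sup>2"
    using mult_right_mono[OF col_sum, of "(norm e)\<^sup>2"] by simp
  finally show ?thesis
    by (rule power2_le_imp_le) simp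
qed

lemma beta_mult_norm_le:
  fixes A :: "'a::{real_normed_vector,semiring_1} ^ 'n ^ 'm"
  assumes "d \<noteq> 0" "card_nz d \<le> k"
  shows "beta A k * norm d \<le> norm (A *v d)"
proof -
  have "beta A k \<le> norm (A *v d) / norm d"
    unfolding beta_def using assms by (intro cInf_lower bdd_belowI[of _ 0]) auto
  then show ?thesis using assms(1) by (simp add: pos_le_divide_eq)
qed

lemma beta_le_one:
  fixes A :: "'a::real_normed_field ^ 'n ^ 'm"
  assumes "col_inf_norm A \<le> 1" "1 \<le> k"
  shows "beta A k \<le> 1"
proof -
  obtain j :: 'n where True by simp
  have "{i. axis j (1::'a) $ i \<noteq> 0} = {j}" by (auto simp: axis_def)
  then have "card_nz (axis j (1::'a)) \<le> k"
    using assms(2) by (simp add: card_nz_def)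
  then have "beta A k * norm (axis j (1::'a)) \<le> norm (A *v axis j 1)"
    by (intro beta_mult_norm_le) (simp add: axis_eq_0_iff)
  also have "\<dots> \<le> 1"
    using norm_matrix_vector_axis_le[OF assms(1), of j 1] by simp
  finally show ?thesis by (simp add: norm_axis)
qed

lemma K_fun_less_dense_perturbation:
  fixes A :: "'a::{real_normed_vector,ring_1} ^ 'n ^ 'm"
  assumes mu: "0 < mu"
    and budget: "2 * mu * real (card_nz x) + (norm (A *v x - b))\<^sup>2 < mu * real N + mu"
    and dense: "N < card_nz (y - x)"
  shows "K_fun mu A b x < K_fun mu A b y"
proof -
  have "real N + 1 \<le> real (card_nz y) + real (card_nz x)"
    using dense card_nz_diff_le[of y x] by linarith
  then have "mu * real N + mu \<le> mu * real (card_nz y) + mu * real (card_nz x)"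
    using mult_left_mono[of _ _ mu] mu by (fastforce simp: distrib_left)
  moreover have "2 * mu * real (card_nz x) = 2 * (mu * real (card_nz x))" by simp
  ultimately show ?thesis
    using budget zero_le_power2[of "norm (A *v y - b)"] unfolding K_fun_def by linarith
qed

section \<open>Eliminating coordinates of modulus below sqrt mu\<close>

definition small_coords :: "real \<Rightarrow> 'a::real_normed_vector ^ 'n \<Rightarrow> 'n set" where
  "small_coords mu y = {i. 0 < norm (y $ i) \<and> norm (y $ i) < sqrt mu}"

lemma concave_quadratic_chord:
  fixes p q r a m :: real
  assumes "r \<le> 0" "0 \<le> a" "a \<le> m"
  shows "(m - a) * p + a * (p + q * m + r * m\<^sup>2) \<le> m * (p + q * a + r * a\<^sup>2)"
proof -
  have "m * (p + q * a + r * a\<^sup>2) - ((m - a) * p + a * (p + q * m + r * m\<^sup>2)) = (- r) * (a * ((m - a) * m))"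
    by (simp add: power2_eq_square algebra_simps)
  moreover have "0 \<le> (- r) * (a * ((m - a) * m))"
    using assms by (intro mult_nonneg_nonneg) auto
  ultimately show ?thesis by linarith
qed

lemma K_reg_along_coordinate:
  fixes A :: "'a::{real_normed_field,real_inner} ^ 'n ^ 'm"
  assumes mu: "0 \<le> mu" and y0: "y0 $ j = 0" and u: "norm u = 1" and t: "0 \<le> t" "t \<le> sqrt mu"
  shows "K_reg mu A b (y0 + t *\<^sub>R axis j u) = K_reg mu A b y0
      + 2 * (sqrt mu + inner (A *v y0 - b) (A *v axis j u)) * t
      + ((norm (A *v axis j u))\<^sup>2 - 1) * t\<^sup>2"
proof -
  define R where "R = (\<Sum>i\<in>UNIV - {j}. q2_coord mu (y0 $ i))"
  have "Q2_card mu (y0 + t *\<^sub>R axis j u) = q2_coord mu (t *\<^sub>R u) + R"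
    unfolding Q2_card_eq_sum_q2_coord R_def
    by (subst sum.remove[of _ j]) (auto simp: y0 axis_def intro!: sum.cong)
  moreover have "Q2_card mu y0 = R"
    unfolding Q2_card_eq_sum_q2_coord R_def
    using mu by (subst sum.remove[of _ j]) (auto simp: y0 q2_coord_def)
  moreover have "q2_coord mu (t *\<^sub>R u) = 2 * sqrt mu * t - t\<^sup>2"
    using mu u t by (simp add: q2_coord_def power2_eq_square algebra_simps)
  moreover have "A *v (y0 + t *\<^sub>R axis j u) - b = (A *v y0 - b) + t *\<^sub>R (A *v axis j u)"
    by (simp add: matrix_vector_right_distrib matrix_vector_scaleR_commute)
  moreover have "(norm ((A *v y0 - b) + t *\<^sub>R (A *v axis j u)))\<^sup>2
      = (norm (A *v y0 - b))\<^sup>2 + 2 * t * inner (A *v y0 - b) (A *v axis j u) + t\<^sup>2 * (norm (A *v axis j u))\<^sup>2"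
    unfolding power2_norm_add by (simp add: power_mult_distrib)
  ultimately show ?thesis
    by (simp add: K_reg_def algebra_simps)
qed

lemma K_reg_chord_along_small_coord:
  fixes A :: "'a::{real_normed_field,real_inner} ^ 'n ^ 'm"
  assumes mu: "0 < mu" and col: "col_inf_norm A \<le> 1" and j: "j \<in> small_coords mu y"
  obtains y0 y1 where "y0 \<noteq> y1"
    and "small_coords mu y0 = small_coords mu y - {j}"
    and "small_coords mu y1 = small_coords mu y - {j}"
    and "(sqrt mu - norm (y $ j)) * K_reg mu A b y0 + norm (y $ j) * K_reg mu A b y1
           \<le> sqrt mu * K_reg mu A b y"
proof -
  define a where "a = norm (y $ j)"
  have a: "0 < a" "a < sqrt mu" using j by (auto simp: small_coords_def a_def)
  define u where "u = (1 / a) *\<^sub>R y $ j"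
  have u: "norm u = 1" using a by (simp add: u_def a_def)
  define y0 where "y0 = (\<chi> i. if i = j then 0 else y $ i)"
  define y1 where "y1 = y0 + sqrt mu *\<^sub>R axis j u"
  have y0j: "y0 $ j = 0" by (simp add: y0_def)
  have y: "y = y0 + a *\<^sub>R axis j u"
    using a by (simp add: y0_def u_def a_def vec_eq_iff axis_def)
  have "(norm (A *v axis j u))\<^sup>2 - 1 \<le> 0"
    using norm_matrix_vector_axis_le[OF col, of j u] u by (simp add: power_le_one)
  then have "(sqrt mu - a) * K_reg mu A b y0 + a * K_reg mu A b y1 \<le> sqrt mu * K_reg mu A b y"
    using concave_quadratic_chord[of _ a "sqrt mu" "K_reg mu A b y0"] a mu
      K_reg_along_coordinate[OF _ y0j u, of mu a A b] K_reg_along_coordinate[OF _ y0j u, of mu "sqrt mu" A b]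
    unfolding y1_def y by simp
  moreover have "y1 $ j \<noteq> y0 $ j"
    using mu u by (auto simp: y1_def y0j)
  then have "y0 \<noteq> y1" by auto
  moreover have "small_coords mu y0 = small_coords mu y - {j}"
    by (auto simp: small_coords_def y0_def)
  moreover have "small_coords mu y1 = small_coords mu y - {j}"
    using u mu by (auto simp: small_coords_def y1_def y0_def axis_def)
  ultimately show ?thesis using that a_def by blast
qed

lemma K_reg_bound_by_eliminating_small_coords:
  fixes A :: "'a::{real_normed_field,real_inner} ^ 'n ^ 'm"
  assumes mu: "0 < mu" and col: "col_inf_norm A \<le> 1"
    and base: "\<And>y. small_coords mu y = {} \<Longrightarrow> c \<le> K_reg mu A b y \<and> (y \<noteq> x \<longrightarrow> c < K_reg mu A b y)"
  shows "c \<le> K_reg mu A b y \<and> (y \<noteq> x \<longrightarrow> c < K_reg mu A b y)"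
proof (induction "card (small_coords mu y)" arbitrary: y)
  case 0
  then show ?case using base by simp
next
  case (Suc k)
  then obtain j where j: "j \<in> small_coords mu y" by fastforce
  obtain y0 y1 where ne: "y0 \<noteq> y1"
    and small0: "small_coords mu y0 = small_coords mu y - {j}"
    and small1: "small_coords mu y1 = small_coords mu y - {j}"
    and chord: "(sqrt mu - norm (y $ j)) * K_reg mu A b y0 + norm (y $ j) * K_reg mu A b y1
                  \<le> sqrt mu * K_reg mu A b y"
    using K_reg_chord_along_small_coord[OF mu col j] .
  have "card (small_coords mu y - {j}) = k" using Suc.hyps(2) j by simp
  then have IH0: "c \<le> K_reg mu A b y0 \<and> (y0 \<noteq> x \<longrightarrow> c < K_reg mu A b y0)"
    and IH1: "c \<le> K_reg mu A b y1 \<and> (y1 \<noteq> x \<longrightarrow> c < K_reg mu A b y1)"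
    using Suc.hyps(1) small0 small1 by simp_all
  define a where "a = norm (y $ j)"
  have a: "0 < a" "0 < sqrt mu - a" using j by (auto simp: small_coords_def a_def)
  have "(sqrt mu - a) * c + a * c < (sqrt mu - a) * K_reg mu A b y0 + a * K_reg mu A b y1"
  proof (cases "y0 = x")
    case True
    then have "a * c < a * K_reg mu A b y1" using ne IH1 a by simp
    moreover have "(sqrt mu - a) * c \<le> (sqrt mu - a) * K_reg mu A b y0" using IH0 a by simp
    ultimately show ?thesis by simp
  next
    case False
    then have "(sqrt mu - a) * c < (sqrt mu - a) * K_reg mu A b y0" using IH0 a by simp
    moreover have "a * c \<le> a * K_reg mu A b y1" using IH1 a by simp
    ultimately show ?thesis by simp
  qed
  then have "sqrt mu * c < sqrt mu * K_reg mu A b y"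
    using chord by (simp add: a_def algebra_simps)
  then have "c < K_reg mu A b y" using mu by simp
  then show ?case by simp
qed

section \<open>Stationary points of K_reg\<close>

locale scalar_conjugation =
  fixes cj :: "'a::{real_normed_field,real_inner} \<Rightarrow> 'a"
  assumes inner_mult_left_conj: "inner (a * c) b = inner c (cj a * b)"
begin

lemma inner_matrix_vector_adjoint: "inner (A *v x) y = inner x (adjoint cj A *v y)"
proof -
  have "inner (A *v x) y = (\<Sum>r\<in>UNIV. \<Sum>i\<in>UNIV. inner (A $ r $ i * x $ i) (y $ r))"
    by (simp add: inner_vec_def matrix_vector_mult_def inner_sum_left)
  also have "\<dots> = (\<Sum>i\<in>UNIV. \<Sum>r\<in>UNIV. inner (x $ i) (cj (A $ r $ i) * y $ r))"
    by (subst sum.swap) (simp only: inner_mult_left_conj)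
  also have "\<dots> = inner x (adjoint cj A *v y)"
    by (simp add: inner_vec_def matrix_vector_mult_def inner_sum_right adjoint_def)
  finally show ?thesis .
qed

definition grad_step :: "'a ^ 'n ^ 'm \<Rightarrow> 'a ^ 'm \<Rightarrow> 'a ^ 'n \<Rightarrow> 'a ^ 'n" where
  "grad_step A b x = x - adjoint cj A *v (A *v x - b)"

lemma grad_step_eq: "grad_step A b x = (x - adjoint cj A *v (A *v x)) + adjoint cj A *v b"
  by (simp add: grad_step_def matrix_vector_mult_diff_distrib)

lemma K_reg_increment:
  "K_reg mu A b (x + d) - K_reg mu A b x =
     (\<Sum>j\<in>UNIV. q2_sq mu (x $ j + d $ j) - q2_sq mu (x $ j) - 2 * inner (grad_step A b x $ j) (d $ j))
     - (norm d)\<^sup>2 + (norm (A *v d))\<^sup>2"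
proof -
  define r where "r = adjoint cj A *v (A *v x - b)"
  have z: "grad_step A b x = x - r" by (simp add: grad_step_def r_def)
  have shift: "A *v (x + d) - b = (A *v x - b) + A *v d"
    by (simp add: matrix_vector_right_distrib)
  have adj: "inner (A *v x - b) (A *v d) = inner d r"
    by (simp only: inner_commute[of "A *v x - b"] inner_matrix_vector_adjoint r_def)
  have "(norm (A *v (x + d) - b))\<^sup>2 = (norm (A *v x - b))\<^sup>2 + 2 * inner d r + (norm (A *v d))\<^sup>2"
    by (simp only: shift power2_norm_add adj)
  then have residual: "(norm (A *v (x + d) - b))\<^sup>2
      = (norm (A *v x - b))\<^sup>2 + 2 * (\<Sum>j\<in>UNIV. inner (d $ j) (r $ j)) + (norm (A *v d))\<^sup>2"
    by (simp only: inner_vec_def)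
  have coord: "q2_coord mu (x $ j + d $ j) - q2_coord mu (x $ j) + 2 * inner (d $ j) (r $ j) =
      q2_sq mu (x $ j + d $ j) - q2_sq mu (x $ j) - 2 * inner (grad_step A b x $ j) (d $ j)
      - (norm (d $ j))\<^sup>2" for j
    by (simp add: q2_sq_def z power2_norm_eq_inner inner_add_left
        inner_add_right inner_diff_left inner_diff_right inner_commute algebra_simps)
  have "K_reg mu A b (x + d) - K_reg mu A b x =
      (\<Sum>j\<in>UNIV. q2_coord mu (x $ j + d $ j) - q2_coord mu (x $ j) + 2 * inner (d $ j) (r $ j))
      + (norm (A *v d))\<^sup>2"
    unfolding K_reg_def Q2_card_eq_sum_q2_coord residual
    by (simp add: sum.distrib sum_subtractf sum_distrib_left)
  also have "\<dots> = (\<Sum>j\<in>UNIV. q2_sq mu (x $ j + d $ j) - q2_sq mu (x $ j)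
      - 2 * inner (grad_step A b x $ j) (d $ j)) - (norm d)\<^sup>2 + (norm (A *v d))\<^sup>2"
    unfolding coord power2_norm_vec[of d] by (simp add: sum_subtractf)
  finally show ?thesis .
qed

lemma stationary_K_reg_coord_subgradient:
  assumes mu: "0 < mu" and col: "col_inf_norm A \<le> 1" and st: "stationary (K_reg mu A b) x"
  shows "q2_sq mu (x $ j) + 2 * inner (grad_step A b x $ j) e \<le> q2_sq mu (x $ j + e)"
proof -
  let ?z = "grad_step A b x $ j"
  (* Along x + s e_j the increment of K_reg is at most that of q2_sq, since the columns of A have
     norm at most 1, and by convexity the latter is at most s times the increment at s = 1. *)
  have "0 \<le> q2_sq mu (x $ j + e) - q2_sq mu (x $ j) - 2 * inner ?z e"
  proof (rule stationary_directional_nonneg[OF st, of "axis j e"])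
    fix s :: real
    assume s: "0 < s" "s \<le> 1"
    define d where "d = axis j (s *\<^sub>R e)"
    have step: "x + s *\<^sub>R axis j e = x + d" by (simp add: d_def vec_eq_iff axis_def)
    have coords: "(\<Sum>i\<in>UNIV. q2_sq mu (x $ i + d $ i) - q2_sq mu (x $ i)
          - 2 * inner (grad_step A b x $ i) (d $ i))
        = q2_sq mu (x $ j + s *\<^sub>R e) - q2_sq mu (x $ j) - 2 * (s * inner ?z e)"
      by (simp add: sum.remove[of _ j] d_def axis_def sum.neutral)
    have "norm (A *v d) \<le> norm d"
      using norm_matrix_vector_axis_le[OF col, of j "s *\<^sub>R e"] by (simp add: d_def norm_axis)
    then have A_d: "(norm (A *v d))\<^sup>2 \<le> (norm d)\<^sup>2" by (simp add: power_mono)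
    have convex: "q2_sq mu (x $ j + s *\<^sub>R e)
        \<le> q2_sq mu (x $ j) - s * q2_sq mu (x $ j) + s * q2_sq mu (x $ j + e)"
      using convex_onD[OF convex_on_q2_sq, of mu s "x $ j" "x $ j + e"] mu s
      by (simp add: algebra_simps)
    have "s * (q2_sq mu (x $ j + e) - q2_sq mu (x $ j) - 2 * inner ?z e)
        = s * q2_sq mu (x $ j + e) - s * q2_sq mu (x $ j) - 2 * (s * inner ?z e)"
      by (simp add: algebra_simps)
    then show "K_reg mu A b (x + s *\<^sub>R axis j e) - K_reg mu A b x
        \<le> s * (q2_sq mu (x $ j + e) - q2_sq mu (x $ j) - 2 * inner ?z e)"
      using K_reg_increment[of mu A b x d] coords A_d convex unfolding step by linarith
  qed
  then show ?thesis by simp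
qed

lemma K_reg_less_sparse_perturbation:
  assumes mu: "0 < mu" and bt: "0 < beta A N" "beta A N \<le> 1"
    and regime: "\<And>j. gap_regime mu (beta A N) (x $ j) (grad_step A b x $ j)"
    and yx: "y \<noteq> x" and sparse: "card_nz (y - x) \<le> N"
  shows "K_reg mu A b x < K_reg mu A b y"
proof -
  define d where "d = y - x"
  have d: "d \<noteq> 0" using yx by (simp add: d_def)
  then obtain j where j: "d $ j \<noteq> 0" by (auto simp: vec_eq_iff)
  let ?excess = "\<lambda>i. q2_sq mu (x $ i + d $ i) - q2_sq mu (x $ i) - 2 * inner (grad_step A b x $ i) (d $ i)"
  have excess: "(1 - (beta A N)\<^sup>2) * (norm (d $ i))\<^sup>2 \<le> ?excess i" for i
    using q2_sq_excess_gap_regime[OF mu bt regime[of i], of "d $ i"] by (cases "d $ i = 0") auto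
  have "(1 - (beta A N)\<^sup>2) * (norm d)\<^sup>2 < (\<Sum>i\<in>UNIV. ?excess i)"
    unfolding power2_norm_vec sum_distrib_left
    using excess q2_sq_excess_gap_regime[OF mu bt regime[of j] j]
    by (intro sum_strict_mono_ex1) auto
  moreover have "(beta A N * norm d)\<^sup>2 \<le> (norm (A *v d))\<^sup>2"
    using beta_mult_norm_le[OF d, of N A] sparse bt by (intro power_mono) (auto simp: d_def)
  ultimately show ?thesis
    using K_reg_increment[of mu A b x d] by (simp add: d_def power_mult_distrib algebra_simps)
qed

theorem unique_global_min_K_fun_K_reg:
  fixes A :: "'a ^ 'n ^ 'm"
  assumes col: "col_inf_norm A \<le> 1" and mu: "0 < mu" and N: "1 \<le> N" and bt: "0 < beta A N"
    and st: "stationary (K_reg mu A b) x"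
    and gap: "\<And>j. norm (grad_step A b x $ j) \<notin> {(beta A N)\<^sup>2 * sqrt mu .. sqrt mu / (beta A N)\<^sup>2}"
    and budget: "2 * mu * real (card_nz x) + (norm (A *v x - b))\<^sup>2 < mu * real N + mu"
  shows "unique_global_min (K_fun mu A b) x \<and> unique_global_min (K_reg mu A b) x"
proof -
  have bt1: "beta A N \<le> 1" using beta_le_one[OF col N] .
  have regime: "gap_regime mu (beta A N) (x $ j) (grad_step A b x $ j)" for j
    using q2_sq_subgradient_gap_regime[OF mu bt bt1 stationary_K_reg_coord_subgradient[OF mu col st] gap] .
  have "sqrt mu \<le> sqrt mu / (beta A N)\<^sup>2"
    using bt bt1 mu by (simp add: power_le_one le_divide_eq)
  then have "x $ j = 0 \<or> sqrt mu \<le> norm (x $ j)" for j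
    using regime[of j] by (auto simp: gap_regime_def)
  then have K_reg_x: "K_reg mu A b x = K_fun mu A b x"
    using mu by (intro K_reg_eq_K_fun) auto
  have K_fun_less: "K_fun mu A b x < K_fun mu A b y" if "y \<noteq> x" for y
  proof (cases "card_nz (y - x) \<le> N")
    case True
    then have "K_reg mu A b x < K_reg mu A b y"
      by (rule K_reg_less_sparse_perturbation[OF mu bt bt1 regime that])
    then show ?thesis using K_reg_le_K_fun[of mu A b y] K_reg_x mu by simp
  next
    case False
    then show ?thesis using K_fun_less_dense_perturbation[OF mu budget] by simp
  qed
  have "K_fun mu A b x \<le> K_reg mu A b y \<and> (y \<noteq> x \<longrightarrow> K_fun mu A b x < K_reg mu A b y)" for y
  proof (rule K_reg_bound_by_eliminating_small_coords[OF mu col])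
    fix y :: "'a ^ 'n"
    assume "small_coords mu y = {}"
    then have "K_reg mu A b y = K_fun mu A b y"
      using mu by (intro K_reg_eq_K_fun) (auto simp: small_coords_def not_less)
    then show "K_fun mu A b x \<le> K_reg mu A b y \<and> (y \<noteq> x \<longrightarrow> K_fun mu A b x < K_reg mu A b y)"
      using K_fun_less[of y] by (cases "y = x") auto
  qed
  then show ?thesis using K_fun_less K_reg_x by (auto simp: unique_global_min_def)
qed

end

interpretation real_scalars: scalar_conjugation "\<lambda>t::real. t"
  by unfold_locales (simp add: ac_simps)

interpretation complex_scalars: scalar_conjugation cnj
  by unfold_locales (simp add: inner_complex_def algebra_simps)

theorem theorem4p5:
  shows "(\<forall>(A :: real ^ 'n ^ 'm) (b :: real ^ 'm) (mu :: real) (N :: nat) (x' :: real ^ 'n).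
            col_inf_norm A \<le> 1 \<and> mu > 0 \<and> N \<ge> 1 \<and> beta A N > 0 \<and>
            stationary (K_reg mu A b) x' \<and>
            (let z' = (x' - adjoint (\<lambda>t. t) A *v (A *v x')) + adjoint (\<lambda>t. t) A *v b in
               \<forall>i. norm (z' $ i) \<notin> {(beta A N)\<^sup>2 * sqrt mu .. sqrt mu / (beta A N)\<^sup>2}) \<and>
            2 * mu * real (card_nz x') + (norm (A *v x' - b))\<^sup>2 < mu * real N + mu
          \<longrightarrow> unique_global_min (K_fun mu A b) x' \<and> unique_global_min (K_reg mu A b) x')
       \<and>
         (\<forall>(A :: complex ^ 'n ^ 'm) (b :: complex ^ 'm) (mu :: real) (N :: nat) (x' :: complex ^ 'n).
            col_inf_norm A \<le> 1 \<and> mu > 0 \<and> N \<ge> 1 \<and> beta A N > 0 \<and>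
            stationary (K_reg mu A b) x' \<and>
            (let z' = (x' - adjoint cnj A *v (A *v x')) + adjoint cnj A *v b in
               \<forall>i. norm (z' $ i) \<notin> {(beta A N)\<^sup>2 * sqrt mu .. sqrt mu / (beta A N)\<^sup>2}) \<and>
            2 * mu * real (card_nz x') + (norm (A *v x' - b))\<^sup>2 < mu * real N + mu
          \<longrightarrow> unique_global_min (K_fun mu A b) x' \<and> unique_global_min (K_reg mu A b) x')"
  by (rule conjI; intro allI impI; elim conjE;
      rule real_scalars.unique_global_min_K_fun_K_reg complex_scalars.unique_global_min_K_fun_K_reg;
      simp add: Let_def real_scalars.grad_step_eq complex_scalars.grad_step_eq)

end
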